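(* Let $q$ be a prime power, $d\ge1$, and let $P\in\mathbb{F}_q[T]$ be monic irreducible of degree $s$ with $s\mid d$. Let $\sigma$ be a generator of $\mathrm{Gal}(\mathbb{F}_{q^d}/\mathbb{F}_q)$ and order the roots $\rho_1,\dots,\rho_s\in\mathbb{F}_{q^d}$ of $P$ so that $\sigma(\rho_i)=\rho_{i+1}$ for $1\le i<s$ and $\sigma(\rho_s)=\rho_1$. For each $i$ let $\lambda_i$ be a generator of the Carlitz torsion module $C_{q^d}[T-\rho_i]=\{z\in\overline{\mathbb{F}_q(T)}: z^{q^d}+(T-\rho_i)z=0\}$, so that $\lambda_i^{q^d-1}=-(T-\rho_i)$. Let $\tilde\sigma$ be any automorphism of $K_{q^d,P}$ fixing $T$ and restricting to $\sigma$ on $\mathbb{F}_{q^d}$. Then for each $1\le i<s$ one has $\tilde\sigma(\lambda_i)=\zeta_{\sigma,i}\lambda_{i+1}$, and $\tilde\sigma(\lambda_s)=\zeta_{\sigma,s}\lambda_1$, where each $\zeta_{\sigma,i}$ is a $(q^d-1)$st root of unity depending on $\sigma$ (and $\tilde\sigma$) and $i$.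
   Context: $K_{q^d,P}$ is the field obtained from $\mathbb{F}_{q^d}(T)$ by adjoining all $u\in\overline{\mathbb{F}_q(T)}$ with $C_{q^d}(P)(u)=0$, where the Carlitz action is $C_{q^d}(T)(u)=Tu+u^{q^d}$ extended $\mathbb{F}_{q^d}$-linearly to polynomials; $K_{q^d,P}/\mathbb{F}_q(T)$ is Galois, and $K_{q^d,P}$ contains all $\lambda_i$. *)

theory Defs
  imports "HOL-Computational_Algebra.Polynomial" "HOL-Computational_Algebra.Primes"
begin

definition is_subfield :: "'a::field set \<Rightarrow> bool" where
  "is_subfield S \<longleftrightarrow> 0 \<in> S \<and> 1 \<in> S \<and>
     (\<forall>x\<in>S. \<forall>y\<in>S. x + y \<in> S \<and> x * y \<in> S) \<and>
     (\<forall>x\<in>S. - x \<in> S \<and> inverse x \<in> S)"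

definition gen_field :: "'a::field set \<Rightarrow> 'a set" where
  "gen_field X = \<Inter>{S. is_subfield S \<and> X \<subseteq> S}"

definition algebraically_closed_type :: "'a::field itself \<Rightarrow> bool" where
  "algebraically_closed_type _ \<longleftrightarrow> (\<forall>p :: 'a poly. degree p > 0 \<longrightarrow> (\<exists>x. poly p x = 0))"

definition poly_over :: "'a::zero set \<Rightarrow> 'a poly \<Rightarrow> bool" where
  "poly_over S p \<longleftrightarrow> set (coeffs p) \<subseteq> S"

definition irreducible_over :: "'a::field set \<Rightarrow> 'a poly \<Rightarrow> bool" where
  "irreducible_over S p \<longleftrightarrow> poly_over S p \<and> degree p \<ge> 1 \<and>
     (\<forall>a b. poly_over S a \<and> poly_over S b \<and> p = a * b \<longrightarrow> degree a = 0 \<or> degree b = 0)"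

definition prime_power :: "nat \<Rightarrow> bool" where
  "prime_power q \<longleftrightarrow> (\<exists>p k. prime p \<and> k > 0 \<and> q = p ^ k)"

definition carlitz_T :: "'a::field \<Rightarrow> nat \<Rightarrow> 'a \<Rightarrow> 'a" where
  "carlitz_T T Q u = T * u + u ^ Q"

(* C_Q(a)(u) for a = \<Sum> a_i T^i (a represented by its coefficient polynomial),
   extended linearly: C(a)(u) = \<Sum> a_i C(T)^i (u) *)
definition carlitz :: "'a::field \<Rightarrow> nat \<Rightarrow> 'a poly \<Rightarrow> 'a \<Rightarrow> 'a" where
  "carlitz T Q a u = (\<Sum>i\<le>degree a. coeff a i * (carlitz_T T Q ^^ i) u)"

definition carlitz_torsion_lin :: "'a::field \<Rightarrow> nat \<Rightarrow> 'a \<Rightarrow> 'a set" where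
  "carlitz_torsion_lin T Q \<rho> = {z. z ^ Q + (T - \<rho>) * z = 0}"

definition carlitz_generator :: "'a::field set \<Rightarrow> 'a \<Rightarrow> nat \<Rightarrow> 'a \<Rightarrow> 'a \<Rightarrow> bool" where
  "carlitz_generator F T Q \<rho> lam \<longleftrightarrow> lam \<in> carlitz_torsion_lin T Q \<rho> \<and>
     (\<forall>z \<in> carlitz_torsion_lin T Q \<rho>. \<exists>a. poly_over F a \<and> z = carlitz T Q a lam)"

definition K_field :: "'a::field set \<Rightarrow> 'a \<Rightarrow> nat \<Rightarrow> 'a poly \<Rightarrow> 'a set" where
  "K_field F T Q P = gen_field (F \<union> {T} \<union> {u. carlitz T Q P u = 0})"

definition field_aut_on :: "'a::field set \<Rightarrow> ('a \<Rightarrow> 'a) \<Rightarrow> bool" where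
  "field_aut_on S f \<longleftrightarrow> bij_betw f S S \<and>
     (\<forall>x\<in>S. \<forall>y\<in>S. f (x + y) = f x + f y \<and> f (x * y) = f x * f y)"

definition gal_generator :: "'a::field set \<Rightarrow> 'a set \<Rightarrow> ('a \<Rightarrow> 'a) \<Rightarrow> bool" where
  "gal_generator F Fq \<sigma> \<longleftrightarrow> field_aut_on F \<sigma> \<and> (\<forall>x\<in>Fq. \<sigma> x = x) \<and>
     (\<forall>\<tau>. field_aut_on F \<tau> \<and> (\<forall>x\<in>Fq. \<tau> x = x) \<longrightarrow> (\<exists>k. \<forall>x\<in>F. \<tau> x = (\<sigma> ^^ k) x))"

end

theory Submission imports Defs begin

text \<open>
  Write \<open>Q = q\<^sup>d\<close>. Since \<open>\<sigma>'\<close> fixes \<open>T\<close>, it maps a nonzero root \<open>\<lambda>\<^sub>i\<close> of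
  \<open>z\<^sup>Q + (T - \<rho>\<^sub>i) z\<close> to a nonzero root of \<open>z\<^sup>Q + (T - \<sigma> \<rho>\<^sub>i) z\<close>. Every nonzero root \<open>w\<close>
  of the latter satisfies \<open>w\<^sup>Q\<^sup>-\<^sup>1 = \<sigma> \<rho>\<^sub>i - T\<close>, so \<open>\<sigma>'(\<lambda>\<^sub>i) / \<lambda>\<^sub>i\<^sub>+\<^sub>1\<close> is a
  \<open>(Q-1)\<close>st root of unity. Two facts make this applicable. First, \<open>\<lambda>\<^sub>i\<close> lies in the domain
  \<open>K\<close> of \<open>\<sigma>'\<close>: as \<open>\<rho>\<^sub>i\<^sup>Q = \<rho>\<^sub>i\<close>, \<open>C(T)\<close> acts on \<open>\<lambda>\<^sub>i\<close> as multiplication by \<open>\<rho>\<^sub>i\<close>,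
  whence \<open>C(P)(\<lambda>\<^sub>i) = P(\<rho>\<^sub>i) \<lambda>\<^sub>i = 0\<close>. Second, \<open>\<lambda>\<^sub>i \<noteq> 0\<close>, since it generates a module that
  contains the roots of \<open>z\<^sup>Q\<^sup>-\<^sup>1 + T - \<rho>\<^sub>i\<close>, and these are nonzero because \<open>T \<noteq> \<rho>\<^sub>i\<close>.
\<close>

lemma is_subfield_gen_field: "is_subfield (gen_field X)"
  unfolding gen_field_def is_subfield_def by auto

lemma gen_field_superset: "X \<subseteq> gen_field X"
  unfolding gen_field_def by auto

lemma subfield_diff: "is_subfield K \<Longrightarrow> x \<in> K \<Longrightarrow> y \<in> K \<Longrightarrow> x - y \<in> K"
  unfolding is_subfield_def by (metis diff_conv_add_uminus)

lemma subfield_mult: "is_subfield K \<Longrightarrow> x \<in> K \<Longrightarrow> y \<in> K \<Longrightarrow> x * y \<in> K"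
  unfolding is_subfield_def by blast

lemma subfield_power: "is_subfield K \<Longrightarrow> x \<in> K \<Longrightarrow> x ^ n \<in> K"
  by (induction n) (auto simp: is_subfield_def)

lemma subfield_power_card:
  assumes K: "is_subfield K" "finite K" and c: "c \<in> K"
  shows "c ^ card K = c"
proof (cases "c = 0")
  case True
  have "card K > 0" using K by (auto simp: is_subfield_def card_gt_0_iff)
  then show ?thesis using True by simp
next
  case False
  define U where "U = K - {0}"
  have "(*) c ` U = U"
  proof
    show "(*) c ` U \<subseteq> U" using K c False unfolding U_def is_subfield_def by auto
    show "U \<subseteq> (*) c ` U"
    proof
      fix y assume "y \<in> U"
      then have "inverse c * y \<in> U" using K c False unfolding U_def is_subfield_def by auto
      then show "y \<in> (*) c ` U" using False by (auto intro!: image_eqI[of y _ "inverse c * y"])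
    qed
  qed
  moreover have "inj_on ((*) c) U" using False by (auto simp: inj_on_def)
  ultimately have "(\<Prod>x\<in>U. c * x) = \<Prod>U" by (metis prod.reindex_cong)
  moreover have "\<Prod>U \<noteq> 0" using K(2) by (simp add: U_def)
  ultimately have "c ^ card U = 1" by (simp add: prod.distrib)
  moreover have "card K = Suc (card U)"
  proof -
    have "0 \<in> K" using K by (simp add: is_subfield_def)
    moreover from this have "card K > 0" using K(2) card_gt_0_iff by blast
    ultimately show ?thesis by (simp add: U_def card_Diff_singleton)
  qed
  ultimately show ?thesis by simp
qed

lemma is_subfield_K_field: "is_subfield (K_field F T Q P)"
  unfolding K_field_def by (rule is_subfield_gen_field)

lemma K_field_superset: "F \<subseteq> K_field F T Q P" "T \<in> K_field F T Q P"
  "{u. carlitz T Q P u = 0} \<subseteq> K_field F T Q P"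
proof -
  have "F \<union> {T} \<union> {u. carlitz T Q P u = 0} \<subseteq> K_field F T Q P"
    unfolding K_field_def by (rule gen_field_superset)
  then show "F \<subseteq> K_field F T Q P" "T \<in> K_field F T Q P"
    "{u. carlitz T Q P u = 0} \<subseteq> K_field F T Q P" by auto
qed

lemma eq_power_imp_root_of_unity_mult:
  fixes x y :: "'a::field"
  assumes "x ^ n = y ^ n" "y \<noteq> 0"
  shows "\<exists>\<zeta>. \<zeta> ^ n = 1 \<and> x = \<zeta> * y"
  using assms by (intro exI[of _ "x / y"]) (simp add: power_divide)

lemma prime_power_ge_2:
  assumes "prime_power q" shows "q \<ge> 2"
proof -
  obtain p k where "prime p" "k > 0" "q = p ^ k" using assms unfolding prime_power_def by blast
  moreover from this have "p \<ge> 2" by (simp add: prime_ge_2_nat)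
  moreover from calculation have "p \<le> p ^ k" by (simp add: self_le_power)
  ultimately show ?thesis by linarith
qed

lemma transcendental_neq:
  assumes "\<forall>p. p \<noteq> 0 \<and> poly_over F p \<longrightarrow> poly p T \<noteq> 0" "is_subfield F" "r \<in> F"
  shows "T \<noteq> r"
proof -
  have "- r \<in> F" "1 \<in> F" using assms(2,3) unfolding is_subfield_def by blast+
  then have "poly_over F [:-r, 1:]" by (simp add: poly_over_def)
  moreover have "[:-r, 1:] \<noteq> 0" by simp
  ultimately have "poly [:-r, 1:] T \<noteq> 0" using assms(1) by blast
  then show ?thesis by auto
qed

lemma carlitz_torsion_lin_iff: "z \<in> carlitz_torsion_lin T Q \<rho> \<longleftrightarrow> carlitz_T T Q z = \<rho> * z"
proof -
  have "z ^ Q + (T - \<rho>) * z = carlitz_T T Q z - \<rho> * z"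
    unfolding carlitz_T_def by (simp add: algebra_simps)
  then show ?thesis by (simp add: carlitz_torsion_lin_def)
qed

lemma carlitz_T_funpow_eigen:
  assumes "\<rho> ^ Q = \<rho>" "carlitz_T T Q u = \<rho> * u"
  shows "(carlitz_T T Q ^^ n) u = \<rho> ^ n * u"
proof (induction n)
  case (Suc n)
  have "(\<rho> ^ n) ^ Q = \<rho> ^ n" using assms(1) by (metis power_mult mult.commute)
  then have "carlitz_T T Q (\<rho> ^ n * u) = \<rho> ^ n * carlitz_T T Q u"
    unfolding carlitz_T_def power_mult_distrib by (simp add: algebra_simps)
  then show ?case using Suc assms(2) by simp
qed simp

lemma carlitz_eigen:
  assumes "\<rho> ^ Q = \<rho>" "carlitz_T T Q u = \<rho> * u"
  shows "carlitz T Q a u = poly a \<rho> * u"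
  unfolding carlitz_def carlitz_T_funpow_eigen[OF assms] poly_altdef
  by (simp add: sum_distrib_right mult.assoc)

lemma carlitz_zero_right:
  assumes "Q \<ge> 1" shows "carlitz T Q a 0 = 0"
proof -
  from assms have "(carlitz_T T Q ^^ n) 0 = 0" for n
    by (induction n) (auto simp: carlitz_T_def)
  then show ?thesis by (simp add: carlitz_def)
qed

lemma carlitz_torsion_lin_nontrivial:
  assumes "algebraically_closed_type TYPE('a::field)" "T \<noteq> (\<rho> :: 'a)" "Q \<ge> 2"
  obtains z where "z \<in> carlitz_torsion_lin T Q \<rho>" "z \<noteq> 0"
proof -
  have "degree (monom 1 (Q - 1) + [:T - \<rho>:]) = Q - 1"
    using assms(3) by (subst degree_add_eq_left) (auto simp: degree_monom_eq)
  then have "degree (monom 1 (Q - 1) + [:T - \<rho>:]) > 0" using assms(3) by simp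
  then obtain z where "poly (monom 1 (Q - 1) + [:T - \<rho>:]) z = 0"
    using assms(1) unfolding algebraically_closed_type_def by blast
  then have z: "z ^ (Q - 1) + (T - \<rho>) = 0" by (simp add: poly_monom)
  have "z ^ Q + (T - \<rho>) * z = z * (z ^ (Q - 1) + (T - \<rho>))"
    using assms(3) by (cases Q) (auto simp: algebra_simps)
  moreover have "z \<noteq> 0" using z assms(2,3) by (auto simp: power_0_left)
  ultimately show ?thesis using that z by (simp add: carlitz_torsion_lin_def)
qed

lemma carlitz_generator_nonzero:
  assumes "carlitz_generator F T Q \<rho> lam" "algebraically_closed_type TYPE('a::field)"
    "T \<noteq> (\<rho> :: 'a)" "Q \<ge> 2"
  shows "lam \<noteq> 0"
proof
  assume "lam = 0"
  obtain z where "z \<in> carlitz_torsion_lin T Q \<rho>" "z \<noteq> 0"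
    using carlitz_torsion_lin_nontrivial assms(2-4) by blast
  then obtain a where "z = carlitz T Q a lam" using assms(1) by (auto simp: carlitz_generator_def)
  then show False using \<open>z \<noteq> 0\<close> \<open>lam = 0\<close> carlitz_zero_right[of Q T a] assms(4) by simp
qed

lemma carlitz_torsion_in_K_field:
  assumes F: "is_subfield F" "finite F" "card F = Q" and \<rho>: "\<rho> \<in> F" "poly P \<rho> = 0"
    and z: "z \<in> carlitz_torsion_lin T Q \<rho>"
  shows "z \<in> K_field F T Q P"
proof -
  have "\<rho> ^ Q = \<rho>" using subfield_power_card[OF F(1,2) \<rho>(1)] F(3) by simp
  moreover have "carlitz_T T Q z = \<rho> * z" using z carlitz_torsion_lin_iff by blast
  ultimately have "carlitz T Q P z = poly P \<rho> * z" by (rule carlitz_eigen)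
  then have "carlitz T Q P z = 0" using \<rho>(2) by simp
  then show ?thesis using K_field_superset(3) by blast
qed

lemma carlitz_torsion_power_pred:
  assumes "z \<in> carlitz_torsion_lin T Q \<rho>" "z \<noteq> 0" "Q \<ge> 1"
  shows "z ^ (Q - 1) = \<rho> - T"
proof -
  have "z ^ Q = z * z ^ (Q - 1)" using assms(3) by (cases Q) simp_all
  then have "z * (z ^ (Q - 1) - (\<rho> - T)) = z ^ Q + (T - \<rho>) * z"
    by (simp add: right_diff_distrib left_diff_distrib mult.commute)
  then have "z * (z ^ (Q - 1) - (\<rho> - T)) = 0" using assms(1) by (simp add: carlitz_torsion_lin_def)
  then show ?thesis using assms(2) by simp
qed

lemma field_aut_on_add: "field_aut_on K f \<Longrightarrow> x \<in> K \<Longrightarrow> y \<in> K \<Longrightarrow> f (x + y) = f x + f y"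
  and field_aut_on_mult: "field_aut_on K f \<Longrightarrow> x \<in> K \<Longrightarrow> y \<in> K \<Longrightarrow> f (x * y) = f x * f y"
  unfolding field_aut_on_def by blast+

context
  fixes K :: "'a::field set" and f :: "'a \<Rightarrow> 'a"
  assumes K: "is_subfield K" and f: "field_aut_on K f"
begin

lemma field_aut_on_zero: "f 0 = 0"
proof -
  have "f 0 = f 0 + f 0" using field_aut_on_add[OF f, of 0 0] K by (simp add: is_subfield_def)
  then show ?thesis by (metis add_cancel_right_right)
qed

lemma field_aut_on_eq_0_iff:
  assumes "x \<in> K" shows "f x = 0 \<longleftrightarrow> x = 0"
proof -
  have "inj_on f K" "0 \<in> K" using f K by (auto simp: field_aut_on_def bij_betw_def is_subfield_def)
  then show ?thesis using assms field_aut_on_zero by (metis inj_on_def)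
qed

lemma field_aut_on_one: "f 1 = 1"
proof -
  have "1 \<in> K" using K by (simp add: is_subfield_def)
  then have "f 1 = f 1 * f 1" "f 1 \<noteq> 0"
    using field_aut_on_mult[OF f, of 1 1] field_aut_on_eq_0_iff by auto
  then show ?thesis by (metis mult_cancel_left1)
qed

lemma field_aut_on_uminus: "x \<in> K \<Longrightarrow> f (- x) = - f x"
  using field_aut_on_add[OF f, of x "- x"] field_aut_on_zero K
  by (simp add: is_subfield_def eq_neg_iff_add_eq_0 add.commute)

lemma field_aut_on_diff: "x \<in> K \<Longrightarrow> y \<in> K \<Longrightarrow> f (x - y) = f x - f y"
  using field_aut_on_add[OF f, of x "- y"] field_aut_on_uminus[of y] K
  by (simp add: is_subfield_def)

lemma field_aut_on_power: "x \<in> K \<Longrightarrow> f (x ^ n) = f x ^ n"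
  by (induction n) (simp_all add: field_aut_on_one field_aut_on_mult[OF f] subfield_power[OF K])

lemma field_aut_on_carlitz_torsion:
  assumes "z \<in> carlitz_torsion_lin T Q \<rho>" "z \<in> K" "T \<in> K" "\<rho> \<in> K" "f T = T"
  shows "f z \<in> carlitz_torsion_lin T Q (f \<rho>)"
proof -
  have T\<rho>: "T - \<rho> \<in> K" using K assms(3,4) by (rule subfield_diff)
  have "f (z ^ Q + (T - \<rho>) * z) = f (z ^ Q) + f ((T - \<rho>) * z)"
    using K assms(2) T\<rho> by (intro field_aut_on_add[OF f] subfield_power subfield_mult)
  also have "\<dots> = f z ^ Q + (T - f \<rho>) * f z"
    using assms(2-5) T\<rho> field_aut_on_power field_aut_on_mult[OF f] field_aut_on_diff by simp
  finally show ?thesis using assms(1) field_aut_on_zero by (simp add: carlitz_torsion_lin_def)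
qed

lemma field_aut_on_carlitz_torsion_root_of_unity:
  assumes "z \<in> carlitz_torsion_lin T Q \<rho>" "z \<in> K" "z \<noteq> 0" "T \<in> K" "\<rho> \<in> K" "f T = T"
    and "w \<in> carlitz_torsion_lin T Q (f \<rho>)" "w \<noteq> 0" "Q \<ge> 1"
  shows "\<exists>\<zeta>. \<zeta> ^ (Q - 1) = 1 \<and> f z = \<zeta> * w"
proof -
  have "f z \<in> carlitz_torsion_lin T Q (f \<rho>)"
    using field_aut_on_carlitz_torsion assms(1,2,4-6) .
  moreover have "f z \<noteq> 0" using field_aut_on_eq_0_iff assms(2,3) by blast
  ultimately have "f z ^ (Q - 1) = w ^ (Q - 1)"
    using carlitz_torsion_power_pred assms(7-9) by metis
  then show ?thesis using eq_power_imp_root_of_unity_mult assms(8) by blast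
qed

end

theorem lemma3p1:
  fixes q d s :: nat and Fq F :: "'a::field set" and T :: 'a and P :: "'a poly"
    and \<sigma> \<sigma>' :: "'a \<Rightarrow> 'a" and \<rho> lam :: "nat \<Rightarrow> 'a"
  assumes alg_closed: "algebraically_closed_type TYPE('a)"
    and q: "prime_power q" and d: "d \<ge> 1"
    and Fq: "is_subfield Fq" "card Fq = q"
    and F: "is_subfield F" "card F = q ^ d" "Fq \<subseteq> F"
    and T_transc: "\<forall>p. p \<noteq> 0 \<and> poly_over F p \<longrightarrow> poly p T \<noteq> 0"
    and P: "lead_coeff P = 1" "irreducible_over Fq P" "degree P = s" "s dvd d"
    and \<sigma>: "gal_generator F Fq \<sigma>"
    and \<rho>_roots: "\<rho> ` {1..s} = {x \<in> F. poly P x = 0}" "inj_on \<rho> {1..s}"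
    and \<rho>_cycle: "\<forall>i. 1 \<le> i \<and> i < s \<longrightarrow> \<sigma> (\<rho> i) = \<rho> (i + 1)" "\<sigma> (\<rho> s) = \<rho> 1"
    and lam: "\<forall>i\<in>{1..s}. carlitz_generator F T (q ^ d) (\<rho> i) (lam i)"
    and \<sigma>': "field_aut_on (K_field F T (q ^ d) P) \<sigma>'" "\<sigma>' T = T"
      "\<forall>x\<in>F. \<sigma>' x = \<sigma> x"
  shows "(\<forall>i. 1 \<le> i \<and> i < s \<longrightarrow>
            (\<exists>\<zeta>. \<zeta> ^ (q ^ d - 1) = 1 \<and> \<sigma>' (lam i) = \<zeta> * lam (i + 1)))
       \<and> (\<exists>\<zeta>. \<zeta> ^ (q ^ d - 1) = 1 \<and> \<sigma>' (lam s) = \<zeta> * lam 1)"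
proof -
  have Q: "q ^ d \<ge> 2" using prime_power_ge_2[OF q] d self_le_power[of q d] by linarith
  then have "finite F" using F(2) card_ge_0_finite by force
  have \<rho>: "\<rho> i \<in> F" "poly P (\<rho> i) = 0" if "i \<in> {1..s}" for i
    using \<rho>_roots(1) that by auto
  have lam_torsion: "lam i \<in> carlitz_torsion_lin T (q ^ d) (\<rho> i)" "lam i \<in> K_field F T (q ^ d) P"
    "lam i \<noteq> 0" if i: "i \<in> {1..s}" for i
  proof -
    have gen: "carlitz_generator F T (q ^ d) (\<rho> i) (lam i)" using lam i by simp
    then show torsion: "lam i \<in> carlitz_torsion_lin T (q ^ d) (\<rho> i)"
      by (simp add: carlitz_generator_def)
    show "lam i \<in> K_field F T (q ^ d) P"
      using carlitz_torsion_in_K_field[OF F(1) \<open>finite F\<close> F(2) \<rho>[OF i] torsion] .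
    show "lam i \<noteq> 0" using carlitz_generator_nonzero[OF gen alg_closed _ Q]
        transcendental_neq[OF T_transc F(1) \<rho>(1)[OF i]] .
  qed
  have step: "\<exists>\<zeta>. \<zeta> ^ (q ^ d - 1) = 1 \<and> \<sigma>' (lam i) = \<zeta> * lam j"
    if i: "i \<in> {1..s}" and j: "j \<in> {1..s}" and "\<sigma> (\<rho> i) = \<rho> j" for i j
  proof -
    have "\<sigma>' (\<rho> i) = \<rho> j" using \<sigma>'(3) \<rho>(1)[OF i] that(3) by simp
    then have "lam j \<in> carlitz_torsion_lin T (q ^ d) (\<sigma>' (\<rho> i))"
      using lam_torsion(1)[OF j] by simp
    moreover have "\<rho> i \<in> K_field F T (q ^ d) P" using K_field_superset(1) \<rho>(1)[OF i] by blast
    ultimately show ?thesis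
      using field_aut_on_carlitz_torsion_root_of_unity[OF is_subfield_K_field \<sigma>'(1)
          lam_torsion[OF i] K_field_superset(2) _ \<sigma>'(2) _ lam_torsion(3)[OF j]] Q by simp
  qed
  have "s \<ge> 1" using P(2,3) unfolding irreducible_over_def by simp
  then show ?thesis using step \<rho>_cycle by auto
qed

end
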